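(* Let $(\Omega,\mathcal{F})$ be a measurable space and $\mathcal{P}=\{P_1,\dots,P_K\}$ a finite set of probability measures on it, with $\hat{\mathbb{E}}[Z]=\max_{1\le i\le K}E_{P_i}[Z]$. Let $X,Y$ be random variables with $\hat{\mathbb{E}}[X^2]+\hat{\mathbb{E}}[Y^2]<\infty$. Let $\boldsymbol{\mu}=(E_{P_1}[X],\dots,E_{P_K}[X])^T$, $\boldsymbol{\nu}=(E_{P_1}[Y],\dots,E_{P_K}[Y])^T$ and $\boldsymbol{\kappa}=(E_{P_1}[XY],\dots,E_{P_K}[XY])^T$ in $\mathbb{R}^K$. Then $$\overline{C}(X,Y)=\max_{\boldsymbol{\lambda}\in\Delta^K}\left(\boldsymbol{\lambda}^T\boldsymbol{\kappa}-\boldsymbol{\lambda}^T\boldsymbol{\mu}\boldsymbol{\nu}^T\boldsymbol{\lambda}\right),$$ where $\Delta^K=\{\boldsymbol{\lambda}=(\lambda_1,\dots,\lambda_K)\in\mathbb{R}^K:\sum_{i=1}^K\lambda_i=1,\ \lambda_i\ge0\}$.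
   Context: For a random variable $W$ with $\hat{\mathbb{E}}[W^2]<\infty$: $\overline{\mu}_W=\hat{\mathbb{E}}[W]$, $\underline{\mu}_W=-\hat{\mathbb{E}}[-W]$, $M_W=[\underline{\mu}_W,\overline{\mu}_W]$. Upper covariance $\overline{C}(X,Y)=\max_{\mu_2\in M_Y}\min_{\mu_1\in M_X}\hat{\mathbb{E}}[(X-\mu_1)(Y-\mu_2)]$. *)

theory Defs
  imports "HOL-Probability.Probability"
begin

text \<open>Sublinear expectation generated by a finite family of probability measures
  P i, indexed by a finite type 'k (so K = CARD('k)).\<close>
definition sublin_exp :: "('k::finite \<Rightarrow> 'a measure) \<Rightarrow> ('a \<Rightarrow> real) \<Rightarrow> real" where
  "sublin_exp P Z = Max (range (\<lambda>i. integral\<^sup>L (P i) Z))"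

definition upper_mean :: "('k::finite \<Rightarrow> 'a measure) \<Rightarrow> ('a \<Rightarrow> real) \<Rightarrow> real" where
  "upper_mean P W = sublin_exp P W"

definition lower_mean :: "('k::finite \<Rightarrow> 'a measure) \<Rightarrow> ('a \<Rightarrow> real) \<Rightarrow> real" where
  "lower_mean P W = - sublin_exp P (\<lambda>w. - W w)"

definition mean_interval :: "('k::finite \<Rightarrow> 'a measure) \<Rightarrow> ('a \<Rightarrow> real) \<Rightarrow> real set" where
  "mean_interval P W = {lower_mean P W .. upper_mean P W}"

definition upper_cov :: "('k::finite \<Rightarrow> 'a measure) \<Rightarrow> ('a \<Rightarrow> real) \<Rightarrow> ('a \<Rightarrow> real) \<Rightarrow> real" where
  "upper_cov P X Y =
     (SUP m2 \<in> mean_interval P Y. INF m1 \<in> mean_interval P X.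
        sublin_exp P (\<lambda>w. (X w - m1) * (Y w - m2)))"

definition prob_simplex :: "('k::finite \<Rightarrow> real) set" where
  "prob_simplex = {l. (\<forall>i. 0 \<le> l i) \<and> (\<Sum>i\<in>UNIV. l i) = 1}"

end

theory Submission
  imports Defs
begin

text \<open>Write \<open>E\<^sub>i\<close> for the expectation under \<open>P\<^sub>i\<close>.  For a mixture \<open>\<lambda>\<close> and \<open>m2 = E\<^sub>\<lambda>Y\<close>,
  averaging \<open>E\<^sub>i[(X - m1)(Y - m2)]\<close> over \<open>\<lambda>\<close> gives \<open>Cov\<^sub>\<lambda>(X, Y)\<close> for every \<open>m1\<close>, so the
  max-min is at least \<open>V = max\<^sub>\<lambda> Cov\<^sub>\<lambda>(X, Y)\<close>.  Conversely, for fixed \<open>m2\<close> the functions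
  \<open>m1 \<mapsto> E\<^sub>i[(X - m1)(Y - m2)]\<close> are affine, and by Helly's theorem on the line their sublevel
  sets at height \<open>V\<close> have a common point in the mean interval of \<open>X\<close> as soon as they meet
  pairwise and each meets that interval: the latter is witnessed by \<open>m1 = E\<^sub>iX\<close>, the former by
  the mixture of \<open>P\<^sub>i\<close> and \<open>P\<^sub>j\<close> under which \<open>Y\<close> has mean \<open>m2\<close>.\<close>

text \<open>With \<open>mu\<close>, \<open>nu\<close>, \<open>kappa\<close> the vectors of \<open>E\<^sub>iX\<close>, \<open>E\<^sub>iY\<close>, \<open>E\<^sub>i[XY]\<close>: \<open>mixture_cov\<close> is the
  paper's objective, the covariance of \<open>X, Y\<close> under the mixture \<open>\<Sum>\<^sub>i l\<^sub>i P\<^sub>i\<close>, and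
  \<open>centered_moment\<close> is \<open>E\<^sub>i[(X - m1)(Y - m2)]\<close>.\<close>

definition mixture_cov ::
    "('k::finite \<Rightarrow> real) \<Rightarrow> ('k \<Rightarrow> real) \<Rightarrow> ('k \<Rightarrow> real) \<Rightarrow> ('k \<Rightarrow> real) \<Rightarrow> real" where
  "mixture_cov mu nu kappa l =
    (\<Sum>i\<in>UNIV. l i * kappa i) - (\<Sum>i\<in>UNIV. l i * mu i) * (\<Sum>i\<in>UNIV. l i * nu i)"

definition centered_moment ::
    "('k \<Rightarrow> real) \<Rightarrow> ('k \<Rightarrow> real) \<Rightarrow> ('k \<Rightarrow> real) \<Rightarrow> 'k \<Rightarrow> real \<Rightarrow> real \<Rightarrow> real" where
  "centered_moment mu nu kappa i m1 m2 = kappa i - m2 * mu i - m1 * nu i + m1 * m2"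

definition max_centered_moment ::
    "('k::finite \<Rightarrow> real) \<Rightarrow> ('k \<Rightarrow> real) \<Rightarrow> ('k \<Rightarrow> real) \<Rightarrow> real \<Rightarrow> real \<Rightarrow> real" where
  "max_centered_moment mu nu kappa m1 m2 = Max (range (\<lambda>i. centered_moment mu nu kappa i m1 m2))"

lemma centered_moment_le_max:
  "centered_moment mu nu kappa i m1 m2 \<le> max_centered_moment mu nu kappa m1 m2"
  unfolding max_centered_moment_def by (rule Max_ge) auto

lemma prob_simplex_weighted_sum_le:
  fixes l f :: "'k::finite \<Rightarrow> real"
  assumes "l \<in> prob_simplex" and "\<And>i. f i \<le> C"
  shows "(\<Sum>i\<in>UNIV. l i * f i) \<le> C"
proof -
  have "(\<Sum>i\<in>UNIV. l i * f i) \<le> (\<Sum>i\<in>UNIV. l i * C)"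
    using assms by (intro sum_mono mult_left_mono) (auto simp: prob_simplex_def)
  also have "\<dots> = C"
    using assms(1) by (simp add: prob_simplex_def flip: sum_distrib_right)
  finally show ?thesis .
qed

lemma prob_simplex_weighted_sum_ge:
  fixes l f :: "'k::finite \<Rightarrow> real"
  assumes "l \<in> prob_simplex" and "\<And>i. C \<le> f i"
  shows "C \<le> (\<Sum>i\<in>UNIV. l i * f i)"
  using prob_simplex_weighted_sum_le[OF assms(1), of "\<lambda>i. - f i" "- C"] assms(2)
  by (simp add: sum_negf)

lemma weighted_sum_two_point:
  fixes f :: "'k::finite \<Rightarrow> real"
  shows "(\<Sum>k\<in>UNIV. (p * of_bool (k = i) + q * of_bool (k = j)) * f k) = p * f i + q * f j"
  by (simp add: distrib_right sum.distrib mult.assoc flip: sum_distrib_left)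

lemma two_point_in_prob_simplex:
  assumes "0 \<le> p" "0 \<le> q" "p + q = 1"
  shows "(\<lambda>k::'k::finite. p * of_bool (k = i) + q * of_bool (k = j)) \<in> prob_simplex"
  using assms weighted_sum_two_point[of p i q j "\<lambda>_. 1"] by (simp add: prob_simplex_def)

lemma Helly_real:
  fixes \<F> :: "real set set"
  assumes "finite \<F>" and "\<And>S. S \<in> \<F> \<Longrightarrow> convex S"
    and "\<And>S T. S \<in> \<F> \<Longrightarrow> T \<in> \<F> \<Longrightarrow> S \<inter> T \<noteq> {}"
  shows "\<Inter>\<F> \<noteq> {}"
proof (cases "card \<F> \<ge> 2")
  case True
  show ?thesis
  proof (rule Helly)
    show "DIM(real) + 1 \<le> card \<F>"
      using True by simp
  next
    fix \<T> assume "\<T> \<subseteq> \<F>" "card \<T> = DIM(real) + 1"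
    then obtain S T where "\<T> = {S, T}" "S \<in> \<F>" "T \<in> \<F>"
      by (auto simp: card_2_iff numeral_2_eq_2[symmetric])
    then show "\<Inter>\<T> \<noteq> {}"
      using assms(3) by auto
  qed (use assms(2) in auto)
next
  case False
  then have singleton: "\<forall>S\<in>\<F>. \<forall>T\<in>\<F>. S = T"
    using assms(1) card_le_Suc0_iff_eq by fastforce
  show ?thesis
  proof (cases "\<F> = {}")
    case False
    then obtain S where "S \<in> \<F>"
      by blast
    with singleton have "\<Inter>\<F> = S"
      by blast
    with assms(3)[OF \<open>S \<in> \<F>\<close> \<open>S \<in> \<F>\<close>] show ?thesis
      by simp
  qed simp
qed

lemma centered_moment_eq:
  "centered_moment mu nu kappa i m1 m2 = (kappa i - mu i * nu i) + (mu i - m1) * (nu i - m2)"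
  by (simp add: centered_moment_def algebra_simps)

lemma weighted_centered_moment:
  fixes mu nu kappa :: "'k::finite \<Rightarrow> real"
  assumes "l \<in> prob_simplex"
  shows "(\<Sum>i\<in>UNIV. l i * centered_moment mu nu kappa i m1 m2)
    = mixture_cov mu nu kappa l
      + ((\<Sum>i\<in>UNIV. l i * mu i) - m1) * ((\<Sum>i\<in>UNIV. l i * nu i) - m2)"
proof -
  have "(\<Sum>i\<in>UNIV. l i * centered_moment mu nu kappa i m1 m2)
    = (\<Sum>i\<in>UNIV. l i * kappa i) - m2 * (\<Sum>i\<in>UNIV. l i * mu i)
      - m1 * (\<Sum>i\<in>UNIV. l i * nu i) + m1 * m2 * (\<Sum>i\<in>UNIV. l i)"
    by (simp add: centered_moment_def algebra_simps sum.distrib sum_subtractf sum_distrib_left)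
  moreover have "(\<Sum>i\<in>UNIV. l i) = 1"
    using assms by (simp add: prob_simplex_def)
  ultimately show ?thesis
    by (simp add: mixture_cov_def algebra_simps)
qed

lemma mixture_cov_le_max_centered_moment:
  assumes "l \<in> prob_simplex"
  shows "mixture_cov mu nu kappa l \<le> max_centered_moment mu nu kappa m1 (\<Sum>i\<in>UNIV. l i * nu i)"
proof -
  let ?m2 = "\<Sum>i\<in>UNIV. l i * nu i"
  have "mixture_cov mu nu kappa l = (\<Sum>i\<in>UNIV. l i * centered_moment mu nu kappa i m1 ?m2)"
    using weighted_centered_moment[OF assms] by simp
  also have "\<dots> \<le> max_centered_moment mu nu kappa m1 ?m2"
    unfolding max_centered_moment_def by (rule prob_simplex_weighted_sum_le[OF assms]) simp
  finally show ?thesis .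
qed

lemma cov_le_of_mixture_cov_le:
  fixes mu nu kappa :: "'k::finite \<Rightarrow> real"
  assumes "\<forall>l\<in>prob_simplex. mixture_cov mu nu kappa l \<le> V"
  shows "kappa i - mu i * nu i \<le> V"
proof -
  let ?delta = "\<lambda>k. 1 * of_bool (k = i) + 0 * of_bool (k = i)"
  have "mixture_cov mu nu kappa ?delta = kappa i - mu i * nu i"
    unfolding mixture_cov_def weighted_sum_two_point by simp
  then show ?thesis
    using assms two_point_in_prob_simplex[of 1 0 i i] by fastforce
qed

lemma centered_moments_common_bound_opposite:
  fixes mu nu kappa :: "'k::finite \<Rightarrow> real"
  assumes V: "\<forall>l\<in>prob_simplex. mixture_cov mu nu kappa l \<le> V"
    and "nu i < m2" "m2 < nu j"
  shows "\<exists>m1. centered_moment mu nu kappa i m1 m2 \<le> V \<and> centered_moment mu nu kappa j m1 m2 \<le> V"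
proof -
  define p where "p = (nu j - m2) / (nu j - nu i)"
  define l where "l k = p * of_bool (k = i) + (1 - p) * of_bool (k = j)" for k
  have "0 \<le> p" "p \<le> 1"
    using assms(2,3) by (auto simp: p_def)
  then have l: "l \<in> prob_simplex"
    unfolding l_def by (intro two_point_in_prob_simplex) auto
  have "p * (nu j - nu i) = nu j - m2"
    using assms(2,3) by (simp add: p_def)
  then have "(\<Sum>k\<in>UNIV. l k * nu k) = m2"
    unfolding l_def weighted_sum_two_point by (simp add: algebra_simps)
  then have mixture: "p * centered_moment mu nu kappa i m1 m2
      + (1 - p) * centered_moment mu nu kappa j m1 m2 \<le> V" for m1
    using weighted_centered_moment[OF l, of mu nu kappa m1 m2] V l
    unfolding l_def weighted_sum_two_point by simp
  \<comment> \<open>at the crossing point of the two affine functions of \<open>m1\<close> both equal their mixture\<close>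
  define m1 where "m1 = (kappa i - kappa j - m2 * (mu i - mu j)) / (nu i - nu j)"
  have crossing: "centered_moment mu nu kappa i m1 m2 = centered_moment mu nu kappa j m1 m2"
    using assms(2,3) by (simp add: centered_moment_def m1_def field_simps)
  then have "centered_moment mu nu kappa j m1 m2 \<le> V"
    using mixture[of m1] by (simp add: algebra_simps)
  with crossing show ?thesis
    by (intro exI[of _ m1]) simp
qed

lemma centered_moments_common_bound:
  fixes mu nu kappa :: "'k::finite \<Rightarrow> real"
  assumes V: "\<forall>l\<in>prob_simplex. mixture_cov mu nu kappa l \<le> V"
  shows "\<exists>m1. centered_moment mu nu kappa i m1 m2 \<le> V \<and> centered_moment mu nu kappa j m1 m2 \<le> V"
proof -
  have same_side: "centered_moment mu nu kappa k m1 m2 \<le> V"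
    if "(mu k - m1) * (nu k - m2) \<le> 0" for k m1
    using that cov_le_of_mixture_cov_le[OF V, of k] by (simp add: centered_moment_eq)
  consider "nu i < m2" "m2 < nu j" | "nu j < m2" "m2 < nu i"
    | "m2 \<le> nu i" "m2 \<le> nu j" | "nu i \<le> m2" "nu j \<le> m2"
    by linarith
  then show ?thesis
  proof cases
    case 1
    then show ?thesis
      by (rule centered_moments_common_bound_opposite[OF V])
  next
    case 2
    then show ?thesis
      using centered_moments_common_bound_opposite[OF V] by blast
  next
    case 3
    then show ?thesis
      by (intro exI[of _ "max (mu i) (mu j)"] conjI same_side mult_nonpos_nonneg) auto
  next
    case 4
    then show ?thesis
      by (intro exI[of _ "min (mu i) (mu j)"] conjI same_side mult_nonneg_nonpos) auto
  qed
qed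

lemma max_centered_moment_le_in_interval:
  fixes mu nu kappa :: "'k::finite \<Rightarrow> real"
  assumes V: "\<forall>l\<in>prob_simplex. mixture_cov mu nu kappa l \<le> V"
    and mu: "\<And>i. mu i \<in> {A0..A1}"
  shows "\<exists>m1\<in>{A0..A1}. max_centered_moment mu nu kappa m1 m2 \<le> V"
proof -
  define C where "C i = {m1. centered_moment mu nu kappa i m1 m2 \<le> V}" for i
  have "convex (C i)" for i
  proof -
    have "C i = {m1. (m2 - nu i) * m1 \<le> V - kappa i + m2 * mu i}"
      by (auto simp: C_def centered_moment_def algebra_simps)
    then show ?thesis
      using convex_halfspace_le[of "m2 - nu i"] by (simp add: inner_real_def)
  qed
  moreover have "{A0..A1} \<inter> C i \<noteq> {}" for i
  proof -
    have "mu i \<in> C i"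
      using cov_le_of_mixture_cov_le[OF V] by (simp add: C_def centered_moment_eq)
    then show ?thesis
      using mu by blast
  qed
  moreover have "C i \<inter> C j \<noteq> {}" for i j
    using centered_moments_common_bound[OF V, of i m2 j] by (auto simp: C_def)
  ultimately have "\<Inter>(insert {A0..A1} (range C)) \<noteq> {}"
    by (intro Helly_real) (use mu in \<open>auto simp: Int_commute\<close>)
  then obtain t where "t \<in> {A0..A1}" "\<And>i. t \<in> C i"
    by blast
  then show ?thesis
    unfolding max_centered_moment_def C_def by (intro bexI[of _ t]) auto
qed

lemma max_centered_moment_bounds:
  fixes mu nu kappa :: "'k::finite \<Rightarrow> real"
  assumes mu: "\<And>i. mu i \<in> {A0..A1}" and nu: "\<And>i. nu i \<in> {B0..B1}"
    and m: "m1 \<in> {A0..A1}" "m2 \<in> {B0..B1}"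
  shows "kappa i - mu i * nu i - (A1 - A0) * (B1 - B0) \<le> max_centered_moment mu nu kappa m1 m2"
    and "max_centered_moment mu nu kappa m1 m2
      \<le> Max (range (\<lambda>i. kappa i - mu i * nu i)) + (A1 - A0) * (B1 - B0)"
proof -
  have near: "\<bar>centered_moment mu nu kappa i m1 m2 - (kappa i - mu i * nu i)\<bar>
      \<le> (A1 - A0) * (B1 - B0)" for i
  proof -
    have "\<bar>mu i - m1\<bar> * \<bar>nu i - m2\<bar> \<le> (A1 - A0) * (B1 - B0)"
      using mu[of i] nu[of i] m by (intro mult_mono) auto
    then show ?thesis
      by (simp add: centered_moment_eq abs_mult)
  qed
  show "kappa i - mu i * nu i - (A1 - A0) * (B1 - B0) \<le> max_centered_moment mu nu kappa m1 m2"
    using near[of i] centered_moment_le_max[of mu nu kappa i m1 m2] by linarith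
  have "centered_moment mu nu kappa i m1 m2
      \<le> Max (range (\<lambda>i. kappa i - mu i * nu i)) + (A1 - A0) * (B1 - B0)" for i
  proof -
    have "kappa i - mu i * nu i \<le> Max (range (\<lambda>i. kappa i - mu i * nu i))"
      by (rule Max_ge) auto
    with near[of i] show ?thesis
      by linarith
  qed
  then show "max_centered_moment mu nu kappa m1 m2
      \<le> Max (range (\<lambda>i. kappa i - mu i * nu i)) + (A1 - A0) * (B1 - B0)"
    by (simp add: max_centered_moment_def)
qed

lemma inf_max_centered_moment_le:
  fixes mu nu kappa :: "'k::finite \<Rightarrow> real"
  assumes mu: "\<And>i. mu i \<in> {A0..A1}" and nu: "\<And>i. nu i \<in> {B0..B1}"
    and V: "\<forall>l\<in>prob_simplex. mixture_cov mu nu kappa l \<le> V"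
    and m2: "m2 \<in> {B0..B1}"
  shows "(INF m1\<in>{A0..A1}. max_centered_moment mu nu kappa m1 m2) \<le> V"
proof -
  obtain m1 where m1: "m1 \<in> {A0..A1}" and le_V: "max_centered_moment mu nu kappa m1 m2 \<le> V"
    using max_centered_moment_le_in_interval[where mu = mu, OF V mu] by blast
  have "bdd_below ((\<lambda>m1. max_centered_moment mu nu kappa m1 m2) ` {A0..A1})"
    using max_centered_moment_bounds(1)[where mu = mu and nu = nu, OF mu nu _ m2] by (rule bdd_belowI2)
  then have "(INF m1\<in>{A0..A1}. max_centered_moment mu nu kappa m1 m2)
      \<le> max_centered_moment mu nu kappa m1 m2"
    by (rule cINF_lower[OF _ m1])
  with le_V show ?thesis
    by linarith
qed

lemma sup_inf_max_centered_moment_eq_sup_mixture_cov: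
  fixes mu nu kappa :: "'k::finite \<Rightarrow> real"
  assumes mu: "\<And>i. mu i \<in> {A0..A1}" and nu: "\<And>i. nu i \<in> {B0..B1}"
  shows "(SUP m2\<in>{B0..B1}. INF m1\<in>{A0..A1}. max_centered_moment mu nu kappa m1 m2)
    = (SUP l\<in>prob_simplex. mixture_cov mu nu kappa l)"
proof -
  define F where "F m2 = (INF m1\<in>{A0..A1}. max_centered_moment mu nu kappa m1 m2)" for m2
  define V where "V = (SUP l\<in>prob_simplex. mixture_cov mu nu kappa l)"
  have "A0 \<le> A1" "B0 \<le> B1"
    using mu nu by (meson atLeastAtMost_iff order.trans)+
  have mean_nu: "(\<Sum>i\<in>UNIV. l i * nu i) \<in> {B0..B1}" if "l \<in> prob_simplex" for l
    using prob_simplex_weighted_sum_le[OF that] prob_simplex_weighted_sum_ge[OF that] nu by auto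
  have "bdd_above (mixture_cov mu nu kappa ` prob_simplex)"
  proof (rule bdd_aboveI2)
    fix l :: "'k \<Rightarrow> real" assume l: "l \<in> prob_simplex"
    have "mixture_cov mu nu kappa l \<le> max_centered_moment mu nu kappa A0 (\<Sum>i\<in>UNIV. l i * nu i)"
      by (rule mixture_cov_le_max_centered_moment[OF l])
    also have "\<dots> \<le> Max (range (\<lambda>i. kappa i - mu i * nu i)) + (A1 - A0) * (B1 - B0)"
      using \<open>A0 \<le> A1\<close> mean_nu[OF l]
      by (intro max_centered_moment_bounds(2)[where mu = mu and nu = nu, OF mu nu]) simp_all
    finally show "mixture_cov mu nu kappa l
        \<le> Max (range (\<lambda>i. kappa i - mu i * nu i)) + (A1 - A0) * (B1 - B0)" .
  qed
  then have V: "\<forall>l\<in>prob_simplex. mixture_cov mu nu kappa l \<le> V"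
    unfolding V_def by (auto intro: cSUP_upper)
  have F_le_V: "F m2 \<le> V" if "m2 \<in> {B0..B1}" for m2
    unfolding F_def by (rule inf_max_centered_moment_le[where mu = mu and nu = nu, OF mu nu V that])
  have cov_le_F: "mixture_cov mu nu kappa l \<le> F (\<Sum>i\<in>UNIV. l i * nu i)"
    if "l \<in> prob_simplex" for l
    unfolding F_def using \<open>A0 \<le> A1\<close>
    by (intro cINF_greatest mixture_cov_le_max_centered_moment that) auto
  have "V \<le> (SUP m2\<in>{B0..B1}. F m2)"
    unfolding V_def
  proof (rule cSUP_mono)
    show "prob_simplex \<noteq> ({} :: ('k \<Rightarrow> real) set)"
      using two_point_in_prob_simplex[of 1 0] by fastforce
    show "bdd_above (F ` {B0..B1})"
      using F_le_V by (intro bdd_aboveI2[where M = V])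
    show "\<exists>m2\<in>{B0..B1}. mixture_cov mu nu kappa l \<le> F m2" if "l \<in> prob_simplex" for l
      using cov_le_F[OF that] mean_nu[OF that] by blast
  qed
  moreover have "(SUP m2\<in>{B0..B1}. F m2) \<le> V"
    using \<open>B0 \<le> B1\<close> F_le_V by (intro cSUP_least) auto
  ultimately show ?thesis
    unfolding F_def V_def by linarith
qed

lemma integrable_mult_of_square_integrable:
  fixes X Y :: "'a \<Rightarrow> real"
  assumes "X \<in> borel_measurable M" "Y \<in> borel_measurable M"
    and "integrable M (\<lambda>w. (X w)\<^sup>2)" "integrable M (\<lambda>w. (Y w)\<^sup>2)"
  shows "integrable M (\<lambda>w. X w * Y w)"
proof (rule Bochner_Integration.integrable_bound)
  show "integrable M (\<lambda>w. (X w)\<^sup>2 + (Y w)\<^sup>2)"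
    using assms(3,4) by simp
  show "(\<lambda>w. X w * Y w) \<in> borel_measurable M"
    using assms(1,2) by simp
  have "\<bar>x * y\<bar> \<le> x\<^sup>2 + y\<^sup>2" for x y :: real
    using sum_squares_bound[of "\<bar>x\<bar>" "\<bar>y\<bar>"] abs_ge_zero[of "x * y"]
    unfolding abs_mult power2_abs by linarith
  then show "AE w in M. norm (X w * Y w) \<le> norm ((X w)\<^sup>2 + (Y w)\<^sup>2)"
    by simp
qed

lemma (in prob_space) integral_centered_product:
  fixes X Y :: "'a \<Rightarrow> real"
  assumes "X \<in> borel_measurable M" "Y \<in> borel_measurable M"
    and "integrable M (\<lambda>w. (X w)\<^sup>2)" "integrable M (\<lambda>w. (Y w)\<^sup>2)"
  shows "(\<integral>w. (X w - m1) * (Y w - m2) \<partial>M)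
    = (\<integral>w. X w * Y w \<partial>M) - m2 * expectation X - m1 * expectation Y + m1 * m2"
proof -
  have "integrable M X" "integrable M Y" "integrable M (\<lambda>w. X w * Y w)"
    using assms square_integrable_imp_integrable integrable_mult_of_square_integrable by blast+
  moreover have "(\<lambda>w. (X w - m1) * (Y w - m2)) = (\<lambda>w. X w * Y w - m2 * X w - m1 * Y w + m1 * m2)"
    by (simp add: algebra_simps)
  ultimately show ?thesis
    by (simp add: prob_space)
qed

lemma mean_in_mean_interval:
  fixes P :: "'k::finite \<Rightarrow> 'a measure"
  shows "integral\<^sup>L (P i) W \<in> mean_interval P W"
proof -
  have "integral\<^sup>L (P i) W \<le> upper_mean P W"
    unfolding upper_mean_def sublin_exp_def by (rule Max_ge) auto
  moreover have "integral\<^sup>L (P i) (\<lambda>w. - W w) \<le> sublin_exp P (\<lambda>w. - W w)"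
    unfolding sublin_exp_def by (rule Max_ge) auto
  ultimately show ?thesis
    by (simp add: mean_interval_def lower_mean_def)
qed

theorem proposition5p1:
  fixes M :: "'a measure" and P :: "'k::finite \<Rightarrow> 'a measure"
    and X Y :: "'a \<Rightarrow> real"
  assumes prob: "\<And>i. prob_space (P i)"
    and sets_eq: "\<And>i. sets (P i) = sets M"
    and X_meas: "X \<in> borel_measurable M" and Y_meas: "Y \<in> borel_measurable M"
    and X_sq: "\<And>i. integrable (P i) (\<lambda>w. (X w)\<^sup>2)"
    and Y_sq: "\<And>i. integrable (P i) (\<lambda>w. (Y w)\<^sup>2)"
  shows "upper_cov P X Y =
    (SUP l \<in> prob_simplex.
        (\<Sum>i\<in>UNIV. l i * integral\<^sup>L (P i) (\<lambda>w. X w * Y w))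
      - (\<Sum>i\<in>UNIV. l i * integral\<^sup>L (P i) X) * (\<Sum>i\<in>UNIV. l i * integral\<^sup>L (P i) Y))"
proof -
  define mu where "mu i = integral\<^sup>L (P i) X" for i
  define nu where "nu i = integral\<^sup>L (P i) Y" for i
  define kappa where "kappa i = integral\<^sup>L (P i) (\<lambda>w. X w * Y w)" for i
  have "integral\<^sup>L (P i) (\<lambda>w. (X w - m1) * (Y w - m2)) = centered_moment mu nu kappa i m1 m2"
    for i m1 m2
    using prob_space.integral_centered_product[OF prob, of X i Y m1 m2] X_sq Y_sq X_meas Y_meas
    by (simp add: measurable_cong_sets[OF sets_eq refl] mu_def nu_def kappa_def centered_moment_def)
  then have "sublin_exp P (\<lambda>w. (X w - m1) * (Y w - m2)) = max_centered_moment mu nu kappa m1 m2"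
    for m1 m2
    by (simp add: sublin_exp_def max_centered_moment_def)
  then have "upper_cov P X Y = (SUP m2\<in>mean_interval P Y. INF m1\<in>mean_interval P X.
      max_centered_moment mu nu kappa m1 m2)"
    by (simp add: upper_cov_def)
  also have "\<dots> = (SUP l\<in>prob_simplex. mixture_cov mu nu kappa l)"
    using mean_in_mean_interval[of P _ X] mean_in_mean_interval[of P _ Y]
    unfolding mean_interval_def mu_def nu_def
    by (rule sup_inf_max_centered_moment_eq_sup_mixture_cov)
  finally show ?thesis
    by (simp add: mixture_cov_def mu_def nu_def kappa_def)
qed

end
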